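(* Let $r\ge3$, $n>r$, $c\ge1$, $\lambda\in\Lambda(n,r)$ (regarded as $n$-periodic) and $1\le i\le n$. In $T$: (i) If $\lambda_i=0$, there is a nonzero $z\in\mathbb{Z}[v,v^{-1}]$ such that $F_i^cE_i^c1_\lambda=z1_\lambda$ if $\lambda_{i+1}\ge c$, and $F_i^cE_i^c1_\lambda=0$ otherwise; moreover, if $c=\lambda_{i+1}=1$ then $z=1$. (ii) If $\lambda_{i+1}=0$, there is a nonzero $z'\in\mathbb{Z}[v,v^{-1}]$ such that $E_i^cF_i^c1_\lambda=z'1_\lambda$ if $\lambda_i\ge c$, and $E_i^cF_i^c1_\lambda=0$ otherwise; moreover, if $c=\lambda_i=1$ then $z'=1$.
   Context: $T$ is the $\mathbb{Q}(v)$-algebra with generators $E_i,F_i,K_i^{\pm1}$ ($1\le i\le n$, indices mod $n$) and relations: $K_iK_j=K_jK_i$; $K_iK_i^{-1}=K_i^{-1}K_i=1$; $K_iE_j=v^{\epsilon^+(i,j)}E_jK_i$; $K_iF_j=v^{-\epsilon^+(i,j)}F_jK_i$ ($\epsilon^+(i,j)=1$ if $j=i$, $-1$ if $j\equiv i-1\pmod n$, $0$ otherwise); $E_iF_j-F_jE_i=\delta_{ij}\frac{K_iK_{i+1}^{-1}-K_i^{-1}K_{i+1}}{v-v^{-1}}$; $E_iE_j=E_jE_i$, $F_iF_j=F_jF_i$ if $i-j\not\equiv\pm1$; $E_i^2E_j-(v+v^{-1})E_iE_jE_i+E_jE_i^2=0$, $F_i^2F_j-(v+v^{-1})F_iF_jF_i+F_jF_i^2=0$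 if $i-j\equiv\pm1\pmod n$; $K_1\cdots K_n=v^r$; $\prod_{j=0}^r(K_i-v^j)=0$. $\Lambda(n,r)$: compositions of $r$ into $n$ nonnegative parts, extended $n$-periodically. $1_\lambda=\prod_{i=1}^n\prod_{s=1}^{\lambda_i}\frac{K_iv^{-s+1}-K_i^{-1}v^{s-1}}{v^s-v^{-s}}$. *)

theory Defs
  imports Main "HOL-Computational_Algebra.Polynomial" "HOL-Computational_Algebra.Fraction_Field"
begin

type_synonym qv = "rat poly fract"

definition vv :: qv where "vv = Fract [:0, 1:] 1"

definition vp :: "int \<Rightarrow> qv" where "vp k = vv powi k"

text \<open>Z[v,v^-1] inside Q(v).\<close>
definition laurent_int :: "qv set" where
  "laurent_int = {z. \<exists>(p::int poly) (k::nat). z = Fract (map_poly of_int p) ([:0, 1:] ^ k)}"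

text \<open>Indices mod n, represented in {1..n}.\<close>
definition per :: "nat \<Rightarrow> int \<Rightarrow> int" where "per n i = (i - 1) mod int n + 1"

definition eps_plus :: "nat \<Rightarrow> int \<Rightarrow> int \<Rightarrow> int" where
  "eps_plus n i j = (if per n j = per n i then 1 else if per n j = per n (i - 1) then -1 else 0)"

definition adjacent :: "nat \<Rightarrow> int \<Rightarrow> int \<Rightarrow> bool" where
  "adjacent n i j \<longleftrightarrow> (i - j) mod int n = 1 \<or> (i - j) mod int n = (int n - 1) mod int n"

definition qv_algebra :: "(qv \<Rightarrow> 'a::ring_1) \<Rightarrow> bool" where
  "qv_algebra phi \<longleftrightarrow> phi 1 = 1 \<and> (\<forall>x y. phi (x + y) = phi x + phi y) \<and>
     (\<forall>x y. phi (x * y) = phi x * phi y) \<and> (\<forall>x a. phi x * a = a * phi x)"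

text \<open>Elements E, F, K, Ki (= K^-1) of a Q(v)-algebra satisfying all relations of T.
  Since T is the universal such algebra, identities in T are exactly the identities
  holding for every such family.\<close>
definition T_rel :: "nat \<Rightarrow> nat \<Rightarrow> (qv \<Rightarrow> 'a::ring_1) \<Rightarrow> (int \<Rightarrow> 'a) \<Rightarrow> (int \<Rightarrow> 'a)
    \<Rightarrow> (int \<Rightarrow> 'a) \<Rightarrow> (int \<Rightarrow> 'a) \<Rightarrow> bool" where
  "T_rel n r phi E F K Ki \<longleftrightarrow> qv_algebra phi \<and>
   (\<forall>i. E (per n i) = E i \<and> F (per n i) = F i \<and> K (per n i) = K i \<and> Ki (per n i) = Ki i) \<and>
   (\<forall>i\<in>{1..int n}. \<forall>j\<in>{1..int n}.
      K i * K j = K j * K i \<and>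
      K i * Ki i = 1 \<and> Ki i * K i = 1 \<and>
      K i * E j = phi (vp (eps_plus n i j)) * E j * K i \<and>
      K i * F j = phi (vp (- eps_plus n i j)) * F j * K i \<and>
      E i * F j - F j * E i =
        (if i = j then phi (inverse (vv - inverse vv)) *
           (K i * Ki (i + 1) - Ki i * K (i + 1)) else 0) \<and>
      (\<not> adjacent n i j \<longrightarrow> E i * E j = E j * E i \<and> F i * F j = F j * F i) \<and>
      (adjacent n i j \<longrightarrow>
         E i * E i * E j - phi (vv + inverse vv) * E i * E j * E i + E j * E i * E i = 0 \<and>
         F i * F i * F j - phi (vv + inverse vv) * F i * F j * F i + F j * F i * F i = 0)) \<and>
   prod_list (map K [1..int n]) = phi (vv ^ r) \<and>
   (\<forall>i\<in>{1..int n}. prod_list (map (\<lambda>j. K i - phi (vv ^ j)) [0..<r + 1]) = 0)"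

definition Lambda :: "nat \<Rightarrow> nat \<Rightarrow> (int \<Rightarrow> nat) set" where
  "Lambda n r = {lam. (\<forall>i. lam (i + int n) = lam i) \<and> (\<Sum>i\<in>{1..int n}. lam i) = r}"

definition one_lam :: "nat \<Rightarrow> (qv \<Rightarrow> 'a::ring_1) \<Rightarrow> (int \<Rightarrow> 'a) \<Rightarrow> (int \<Rightarrow> 'a)
    \<Rightarrow> (int \<Rightarrow> nat) \<Rightarrow> 'a" where
  "one_lam n phi K Ki lam =
     prod_list (map (\<lambda>i. prod_list (map (\<lambda>s.
        (K i * phi (vp (- int s + 1)) - Ki i * phi (vp (int s - 1))) *
        phi (inverse (vp (int s) - vp (- int s)))) [1..<lam i + 1])) [1..int n])"

end

theory Submission
  imports Defs
begin

(* Each K_m satisfies (K_m - 1)(K_m - v)...(K_m - v^r) = 0, and the factor of 1_lambda belonging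
   to m vanishes at the eigenvalues v^0, ..., v^(lambda_m - 1).  Hence 1_lambda is a sum of
   eigenvectors of K_m with eigenvalues v^b, lambda_m <= b <= r.  The K_m commute, so the
   eigenvalues of their product K_1...K_n = v^r on 1_lambda are v^c with c >= sum_m lambda_m = r,
   and this forces K_m 1_lambda = v^(lambda_m) 1_lambda for every m.
   If lambda_i = 0, then F_i 1_lambda would be an eigenvector of K_i for v^-1, which is not a
   root, so F_i 1_lambda = 0.  The sl_2 relations then give the classical formula
   F_i^c E_i^c 1_lambda = (prod_{k=1..c} [k] [L + 1 - k]) 1_lambda with L = lambda_(i+1), whose
   quantum integers are nonzero Laurent polynomials for c <= L, while the factor k = L + 1
   vanishes for c > L.  Part (ii) is the same computation with E_i and F_i exchanged. *)

definition commute :: "'a::ring_1 \<Rightarrow> 'a \<Rightarrow> bool" where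
  "commute x y \<longleftrightarrow> x * y = y * x"

lemma commute_sym: "commute x y \<Longrightarrow> commute y x"
  by (simp add: commute_def)

lemma commute_one_right [simp]: "commute x 1"
  by (simp add: commute_def)

lemma commute_mult_right [intro]: "commute x y \<Longrightarrow> commute x z \<Longrightarrow> commute x (y * z)"
  unfolding commute_def by (metis mult.assoc)

lemma commute_add_right [intro]: "commute x y \<Longrightarrow> commute x z \<Longrightarrow> commute x (y + z)"
  and commute_diff_right [intro]: "commute x y \<Longrightarrow> commute x z \<Longrightarrow> commute x (y - z)"
  unfolding commute_def by (simp_all add: algebra_simps)

lemma commute_prod_list_right [intro]:
  "(\<And>z. z \<in> set zs \<Longrightarrow> commute x z) \<Longrightarrow> commute x (prod_list zs)"
proof (induct zs)
  case (Cons a zs)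
  then have "commute x a" "commute x (prod_list zs)"
    by simp_all
  then show ?case
    by (simp add: commute_mult_right)
qed simp

lemma commute_inverse:
  assumes "commute k u" "k * ki = 1" "ki * k = 1"
  shows "commute ki u"
proof -
  have "ki * u = ki * (u * k) * ki"
    using assms(2) by (simp add: mult.assoc)
  also have "\<dots> = (ki * k) * u * ki"
    using assms(1) by (simp add: commute_def mult.assoc)
  also have "\<dots> = u * ki"
    using assms(3) by simp
  finally show ?thesis
    by (simp add: commute_def)
qed

lemma prod_list_mult_eq_zero:
  assumes "\<And>z. z \<in> set zs \<Longrightarrow> commute x z" "b \<in> set zs" "b * x = 0"
  shows "prod_list zs * x = 0"
  using assms
proof (induct zs)
  case (Cons a zs)
  show ?case
  proof (cases "a = b")
    case True
    have "commute x (prod_list zs)"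
      using Cons.prems(1) by (intro commute_prod_list_right) simp
    then have "prod_list (a # zs) * x = b * (x * prod_list zs)"
      using True by (simp add: commute_def mult.assoc)
    also have "\<dots> = 0"
      using Cons.prems(3) by (simp add: mult.assoc[symmetric])
    finally show ?thesis .
  next
    case False
    then show ?thesis
      using Cons by (simp add: mult.assoc)
  qed
qed simp

locale qv_alg =
  fixes phi :: "qv \<Rightarrow> 'a::ring_1"
  assumes qv_algebra: "qv_algebra phi"
begin

lemma phi_1 [simp]: "phi 1 = 1"
  and phi_add [simp]: "phi (x + y) = phi x + phi y"
  and phi_mult [simp]: "phi (x * y) = phi x * phi y"
  and phi_central: "phi x * a = a * phi x"
  using qv_algebra unfolding qv_algebra_def by blast+

lemma phi_0 [simp]: "phi 0 = 0"
  using phi_add[of 0 0] by simp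

lemma phi_uminus [simp]: "phi (- x) = - phi x"
  using phi_add[of x "- x"] by (simp add: eq_neg_iff_add_eq_0 add.commute)

lemma phi_diff [simp]: "phi (x - y) = phi x - phi y"
  using phi_add[of x "- y"] by simp

lemma commute_phi [simp]: "commute (phi x) a" "commute a (phi x)"
  by (simp_all add: commute_def phi_central)

lemma phi_left_commute: "a * (phi x * b) = phi x * (a * b)"
  by (metis mult.assoc phi_central)

lemma phi_mult_assoc: "phi x * (phi y * a) = phi (x * y) * a"
  by (simp add: mult.assoc)

lemma phi_cancel:
  assumes "x \<noteq> 0" "phi x * a = 0"
  shows "a = 0"
proof -
  have "a = phi (inverse x * x) * a"
    using assms(1) by simp
  also have "\<dots> = 0"
    using assms(2) by (simp only: phi_mult mult.assoc mult_zero_right)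
  finally show ?thesis .
qed

definition aeval :: "'a \<Rightarrow> qv poly \<Rightarrow> 'a" where
  "aeval u p = fold_coeffs (\<lambda>a acc. phi a + u * acc) p 0"

lemma aeval_0 [simp]: "aeval u 0 = 0"
  by (simp add: aeval_def)

lemma aeval_pCons [simp]: "aeval u (pCons a p) = phi a + u * aeval u p"
  by (cases "a = 0 \<and> p = 0") (auto simp: aeval_def)

lemma aeval_1 [simp]: "aeval u 1 = 1"
  by (simp add: one_pCons)

lemma aeval_add [simp]: "aeval u (p + q) = aeval u p + aeval u q"
proof (induct p arbitrary: q)
  case (pCons a p)
  then show ?case
    by (cases q) (simp add: algebra_simps)
qed simp

lemma aeval_uminus [simp]: "aeval u (- p) = - aeval u p"
  by (metis add_eq_0_iff aeval_0 aeval_add neg_eq_iff_add_eq_0)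

lemma aeval_diff [simp]: "aeval u (p - q) = aeval u p - aeval u q"
  by (metis diff_conv_add_uminus aeval_add aeval_uminus)

lemma aeval_smult [simp]: "aeval u (smult a p) = phi a * aeval u p"
  by (induct p) (simp_all add: distrib_left phi_left_commute)

lemma aeval_mult [simp]: "aeval u (p * q) = aeval u p * aeval u q"
  by (induct p) (auto simp: algebra_simps)

lemma aeval_prod_list: "aeval u (prod_list ps) = prod_list (map (aeval u) ps)"
  by (induct ps) auto

lemma aeval_phi: "aeval (phi c) p = phi (poly p c)"
  by (induct p) auto

lemma commute_aeval_right [intro]:
  assumes "commute u w"
  shows "commute w (aeval u p)"
proof (induct p)
  case (pCons a p)
  have "commute w u"
    using assms by (rule commute_sym)
  then show ?case
    using pCons by (auto intro!: commute_add_right commute_mult_right)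
qed (simp add: commute_def)

lemma commute_aeval_left [intro]: "commute u w \<Longrightarrow> commute (aeval u p) w"
  using commute_aeval_right commute_sym by blast

lemma aeval_eigen:
  assumes "u * x = phi c * x"
  shows "aeval u p * x = phi (poly p c) * x"
proof (induct p)
  case (pCons a p)
  have "aeval u (pCons a p) * x = phi a * x + u * (aeval u p * x)"
    by (simp add: distrib_right mult.assoc)
  also have "\<dots> = phi a * x + phi (poly p c) * (u * x)"
    by (simp only: pCons phi_left_commute)
  also have "\<dots> = phi (poly (pCons a p) c) * x"
    by (simp add: assms phi_mult_assoc distrib_right mult.commute)
  finally show ?case .
qed simp

lemma eigen_inverse:
  assumes "ki * k = 1" "k * x = phi c * x" "c \<noteq> 0"
  shows "ki * x = phi (inverse c) * x"
proof -
  have "phi (inverse c) * x = phi (inverse c) * (ki * (k * x))"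
    using assms(1) by (simp add: mult.assoc[symmetric])
  also have "\<dots> = ki * (phi (inverse c) * (k * x))"
    by (rule phi_left_commute[symmetric])
  also have "\<dots> = ki * (phi (inverse c) * (phi c * x))"
    by (simp only: assms(2))
  also have "\<dots> = ki * x"
    using assms(3) by (simp add: phi_mult_assoc)
  finally show ?thesis ..
qed

end

section \<open>Powers of v and quantum integers\<close>

lemma vv_power: "vv ^ a = Fract ([:0, 1:] ^ a) 1"
  by (induct a) (simp_all add: vv_def One_fract_def)

lemma vv_nonzero [simp]: "vv \<noteq> 0"
  unfolding vv_def Zero_fract_def by (subst eq_fract(1)) auto

lemma vv_power_inject [simp]: "vv ^ a = vv ^ b \<longleftrightarrow> a = b"
proof
  assume "vv ^ a = vv ^ b"
  then have "([:0, 1:] ^ a :: rat poly) = [:0, 1:] ^ b"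
    unfolding vv_power by (subst (asm) eq_fract(1)) auto
  then show "a = b"
    using degree_linear_power[of "0::rat"] by (metis one_neq_zero)
qed simp

lemma vp_of_nat [simp]: "vp (int t) = vv ^ t"
  by (simp add: vp_def)

lemma vp_0 [simp]: "vp 0 = 1" and vp_1 [simp]: "vp 1 = vv"
  by (simp_all add: vp_def)

lemma vp_add: "vp (a + b) = vp a * vp b"
  by (simp add: vp_def power_int_add)

lemma vp_uminus: "vp (- a) = inverse (vp a)"
  by (simp add: vp_def power_int_minus)

lemma vp_nonzero [simp]: "vp a \<noteq> 0"
  by (simp add: vp_def)

lemma vp_eq_1_iff [simp]: "vp a = 1 \<longleftrightarrow> a = 0"
proof
  assume a: "vp a = 1"
  obtain m where m: "a = int m \<or> a = - int m"
    by (metis int_cases2)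
  then have "vv ^ m = 1"
    using a by (auto simp: vp_uminus)
  then have "m = 0"
    using vv_power_inject[of m 0] by simp
  then show "a = 0"
    using m by simp
qed simp

lemma vp_inject: "vp a = vp b \<longleftrightarrow> a = b"
  using vp_eq_1_iff[of "a - b"] vp_add[of "a - b" b] by auto

lemma vp_minus_one_not_vv_power: "vp (- 1) \<notin> (\<lambda>b. vv ^ b) ` S"
  by (auto simp: vp_inject simp flip: vp_of_nat)

lemma vv_minus_inverse_nonzero: "vv - inverse vv \<noteq> 0"
proof
  assume "vv - inverse vv = 0"
  then have "vp 2 = 1"
    by (simp add: vp_def field_simps power2_eq_square)
  then show False
    by simp
qed

definition qint :: "int \<Rightarrow> qv" where
  "qint m = (vp m - vp (- m)) / (vv - inverse vv)"

lemma qint_0 [simp]: "qint 0 = 0"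
  by (simp add: qint_def)

lemma qint_1 [simp]: "qint 1 = 1"
  using vv_minus_inverse_nonzero by (simp add: qint_def vp_uminus)

lemma qint_uminus: "qint (- m) = - qint m"
  by (simp add: qint_def minus_divide_left)

lemma qint_nonzero: "m \<noteq> 0 \<Longrightarrow> qint m \<noteq> 0"
  using vp_inject[of m "- m"] vv_minus_inverse_nonzero by (simp add: qint_def)

lemma qint_mult_diff: "qint (k + 1) * qint j - qint k * qint (j + 1) = qint (j - k)"
proof -
  have identity: "(a * x - ia * ix) / (x - ix) * ((b - ib) / (x - ix))
      - (a - ia) / (x - ix) * ((b * x - ib * ix) / (x - ix)) = (b * ia - ib * a) / (x - ix)"
    if "x - ix \<noteq> 0" for a ia b ib x ix :: qv
    using that by (simp add: divide_simps) (simp add: algebra_simps)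
  have "vp (k + 1) = vp k * vv" "vp (- (k + 1)) = vp (- k) * inverse vv"
    "vp (j + 1) = vp j * vv" "vp (- (j + 1)) = vp (- j) * inverse vv"
    "vp (j - k) = vp j * vp (- k)" "vp (- (j - k)) = vp (- j) * vp k"
    by (simp_all only: vp_add vp_uminus vp_1 diff_conv_add_uminus minus_add_distrib minus_minus
        inverse_mult_distrib)
  then show ?thesis
    unfolding qint_def
    by (simp only: identity[OF vv_minus_inverse_nonzero])
qed

lemma sum_qint_arith: "(\<Sum>s<k. qint (L - 2 * int s)) = qint (int k) * qint (L + 1 - int k)"
proof (induct k)
  case (Suc k)
  then show ?case
    using qint_mult_diff[of "int k" "L - int k"] by (simp add: algebra_simps)
qed simp

lemma map_poly_of_int_add:
  "map_poly of_int (p + q) = map_poly of_int p + (map_poly of_int q :: 'a::ring_1 poly)"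
  by (rule poly_eqI) (simp add: coeff_map_poly)

lemma map_poly_of_int_mult:
  "map_poly of_int (p * q) = map_poly of_int p * (map_poly of_int q :: 'a::comm_ring_1 poly)"
  by (rule poly_eqI) (simp add: coeff_map_poly coeff_mult)

lemma map_poly_of_int_X_power:
  "map_poly of_int ([:0, 1:] ^ k) = ([:0, 1:] ^ k :: 'a::comm_ring_1 poly)"
  by (induct k) (simp_all add: map_poly_of_int_mult map_poly_pCons)

lemma zero_in_laurent_int: "0 \<in> laurent_int"
  unfolding laurent_int_def Zero_fract_def by (intro CollectI exI[of _ 0] exI[of _ 0]) simp

lemma laurent_int_mult: "a \<in> laurent_int \<Longrightarrow> b \<in> laurent_int \<Longrightarrow> a * b \<in> laurent_int"
  unfolding laurent_int_def
proof clarify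
  fix p k q l
  show "\<exists>p' k'. Fract (map_poly of_int p) ([:0, 1:] ^ k) * Fract (map_poly of_int q) ([:0, 1:] ^ l)
      = Fract (map_poly of_int p') ([:0, 1:] ^ k')"
    by (intro exI[of _ "p * q"] exI[of _ "k + l"]) (simp add: map_poly_of_int_mult power_add)
qed

lemma laurent_int_add: "a \<in> laurent_int \<Longrightarrow> b \<in> laurent_int \<Longrightarrow> a + b \<in> laurent_int"
  unfolding laurent_int_def
proof clarify
  fix p k q l
  show "\<exists>p' k'. Fract (map_poly of_int p) ([:0, 1:] ^ k) + Fract (map_poly of_int q) ([:0, 1:] ^ l)
      = Fract (map_poly of_int p') ([:0, 1:] ^ k')"
    by (intro exI[of _ "p * [:0, 1:] ^ l + q * [:0, 1:] ^ k"] exI[of _ "k + l"])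
      (simp add: map_poly_of_int_add map_poly_of_int_mult map_poly_of_int_X_power power_add)
qed

lemma vp_in_laurent_int: "vp a \<in> laurent_int"
proof -
  obtain m where "a = int m \<or> a = - int m"
    by (metis int_cases2)
  then show ?thesis
    unfolding laurent_int_def
  proof
    assume "a = int m"
    then show "vp a \<in> {z. \<exists>p k. z = Fract (map_poly of_int p) ([:0, 1:] ^ k)}"
      by (intro CollectI exI[of _ "[:0, 1:] ^ m"] exI[of _ 0])
        (simp add: vv_power map_poly_of_int_X_power)
  next
    assume "a = - int m"
    then show "vp a \<in> {z. \<exists>p k. z = Fract (map_poly of_int p) ([:0, 1:] ^ k)}"
      by (intro CollectI exI[of _ 1] exI[of _ m]) (simp add: vp_uminus vv_power)
  qed
qed

lemma one_in_laurent_int: "1 \<in> laurent_int"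
  using vp_in_laurent_int[of 0] by simp

lemma laurent_int_prod: "(\<And>k. k \<in> A \<Longrightarrow> f k \<in> laurent_int) \<Longrightarrow> prod f A \<in> laurent_int"
  by (induct A rule: infinite_finite_induct) (simp_all add: one_in_laurent_int laurent_int_mult)

lemma qint_Suc: "qint (m + 1) = vv * qint m + vp (- m)"
proof -
  have identity: "(a * x - inverse a * inverse x) / (x - inverse x)
      = x * ((a - inverse a) / (x - inverse x)) + inverse a"
    if "x - inverse x \<noteq> 0" "a \<noteq> 0" "x \<noteq> 0" for a x :: qv
    using that by (simp add: divide_simps) (simp add: algebra_simps)
  have "vp (m + 1) = vp m * vv" "vp (- (m + 1)) = inverse (vp m) * inverse vv"
    by (simp_all only: vp_add vp_uminus vp_1 minus_add_distrib inverse_mult_distrib)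
  then show ?thesis
    using identity[OF vv_minus_inverse_nonzero vp_nonzero[of m] vv_nonzero]
    by (simp add: qint_def vp_uminus)
qed

lemma qint_in_laurent_int: "m \<ge> 0 \<Longrightarrow> qint m \<in> laurent_int"
proof (induct m rule: int_ge_induct)
  case base
  show ?case
    by (simp add: zero_in_laurent_int)
next
  case (step m)
  show ?case
    unfolding qint_Suc using step vp_in_laurent_int[of 1]
    by (intro laurent_int_add laurent_int_mult vp_in_laurent_int) simp_all
qed

section \<open>Spectral decomposition for commuting elements\<close>

definition roots_poly :: "nat set \<Rightarrow> qv poly" where
  "roots_poly S = (\<Prod>b\<in>S. [:- (vv ^ b), 1:])"

lemma roots_poly_insert:
  "finite S \<Longrightarrow> a \<notin> S \<Longrightarrow> roots_poly (insert a S) = [:- (vv ^ a), 1:] * roots_poly S"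
  by (simp add: roots_poly_def)

lemma roots_poly_subset_diff:
  "finite S' \<Longrightarrow> S \<subseteq> S' \<Longrightarrow> roots_poly S' = roots_poly (S' - S) * roots_poly S"
  unfolding roots_poly_def by (rule prod.subset_diff)

lemma poly_roots_poly: "poly (roots_poly S) c = (\<Prod>b\<in>S. c - vv ^ b)"
  by (simp add: roots_poly_def poly_prod)

lemma poly_roots_poly_nonzero: "finite S \<Longrightarrow> a \<notin> S \<Longrightarrow> poly (roots_poly S) (vv ^ a) \<noteq> 0"
  by (auto simp: poly_roots_poly)

context qv_alg begin

(* As the roots v^b are pairwise distinct, spectrum_in u x S says that x is a sum of
   eigenvectors of u with eigenvalues in {v^b | b \<in> S}. *)
definition spectrum_in :: "'a \<Rightarrow> 'a \<Rightarrow> nat set \<Rightarrow> bool" where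
  "spectrum_in u x S \<longleftrightarrow> finite S \<and> aeval u (roots_poly S) * x = 0"

lemma spectrum_in_mono: "spectrum_in u x S \<Longrightarrow> finite S' \<Longrightarrow> S \<subseteq> S' \<Longrightarrow> spectrum_in u x S'"
  unfolding spectrum_in_def by (simp add: roots_poly_subset_diff mult.assoc)

lemma spectrum_in_empty: "spectrum_in u x {} \<Longrightarrow> x = 0"
  by (simp add: spectrum_in_def roots_poly_def)

lemma spectrum_in_singleton: "spectrum_in u x {a} \<longleftrightarrow> u * x = phi (vv ^ a) * x"
  by (simp add: spectrum_in_def roots_poly_def algebra_simps)

lemma spectrum_in_add: "spectrum_in u x S \<Longrightarrow> spectrum_in u x' S \<Longrightarrow> spectrum_in u (x + x') S"
  by (simp add: spectrum_in_def distrib_left)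

lemma spectrum_in_diff: "spectrum_in u x S \<Longrightarrow> spectrum_in u x' S \<Longrightarrow> spectrum_in u (x - x') S"
  by (simp add: spectrum_in_def right_diff_distrib)

lemma spectrum_in_commute_mult:
  assumes "spectrum_in u x S" "commute u w"
  shows "spectrum_in u (w * x) S"
proof -
  have "commute (aeval u (roots_poly S)) w"
    using assms(2) by (rule commute_aeval_left)
  then have "aeval u (roots_poly S) * (w * x) = w * (aeval u (roots_poly S) * x)"
    by (simp add: commute_def mult.assoc[symmetric])
  then show ?thesis
    using assms(1) by (simp add: spectrum_in_def)
qed

(* The polynomial q is 1 modulo X - v^a and 0 modulo roots_poly S. *)
lemma spectrum_in_insert_split:
  assumes "spectrum_in u x (insert a S)" "a \<notin> S"
  obtains q where "spectrum_in u (aeval u q * x) {a}" "spectrum_in u (x - aeval u q * x) S"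
proof -
  have fin: "finite S"
    using assms(1) by (simp add: spectrum_in_def)
  define c where "c = poly (roots_poly S) (vv ^ a)"
  have "c \<noteq> 0"
    unfolding c_def using fin assms(2) by (rule poly_roots_poly_nonzero)
  define q where "q = smult (inverse c) (roots_poly S)"
  have "[:- (vv ^ a), 1:] dvd 1 - q"
    using \<open>c \<noteq> 0\<close> by (simp add: poly_eq_0_iff_dvd[symmetric] q_def c_def)
  then obtain h where h: "1 - q = [:- (vv ^ a), 1:] * h"
    by (rule dvdE)
  have ins: "roots_poly (insert a S) = [:- (vv ^ a), 1:] * roots_poly S"
    using fin assms(2) by (rule roots_poly_insert)
  have zero: "aeval u (roots_poly (insert a S)) * x = 0"
    using assms(1) by (simp add: spectrum_in_def)
  have "roots_poly {a} = [:- (vv ^ a), 1:]"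
    by (simp add: roots_poly_def)
  then have eigen_part: "roots_poly {a} * q = smult (inverse c) (roots_poly (insert a S))"
    by (simp only: ins q_def mult_smult_right)
  have rest_part: "roots_poly S * (1 - q) = h * roots_poly (insert a S)"
    by (simp only: h ins ac_simps)
  have "aeval u (roots_poly {a}) * (aeval u q * x) = aeval u (roots_poly {a} * q) * x"
    by (simp add: mult.assoc)
  also have "\<dots> = phi (inverse c) * (aeval u (roots_poly (insert a S)) * x)"
    by (simp add: eigen_part mult.assoc)
  finally have eigen: "spectrum_in u (aeval u q * x) {a}"
    using zero by (simp add: spectrum_in_def)
  have "aeval u (roots_poly S) * (x - aeval u q * x) = aeval u (roots_poly S * (1 - q)) * x"
    by (simp add: right_diff_distrib left_diff_distrib mult.assoc)
  also have "\<dots> = aeval u h * (aeval u (roots_poly (insert a S)) * x)"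
    by (simp only: rest_part aeval_mult mult.assoc)
  finally have "spectrum_in u (x - aeval u q * x) S"
    using zero fin by (simp add: spectrum_in_def)
  with eigen show ?thesis
    by (rule that)
qed

lemma aeval_mult_eigen_pcompose:
  assumes "commute A B" "A * x = phi (vv ^ a) * x"
  shows "aeval (A * B) p * x = aeval B (pcompose p [:0, vv ^ a:]) * x"
proof (induct p)
  case (pCons c p)
  let ?p' = "pcompose p [:0, vv ^ a:]"
  have commute_A: "commute A (B * aeval B ?p')"
    using commute_mult_right[OF assms(1) commute_aeval_right[OF commute_sym[OF assms(1)]]] .
  have "aeval (A * B) (pCons c p) * x = phi c * x + A * (B * aeval B ?p') * x"
    using pCons by (simp add: algebra_simps)
  also have "\<dots> = phi c * x + B * aeval B ?p' * (A * x)"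
    using commute_A by (simp add: commute_def mult.assoc)
  also have "\<dots> = aeval B (pcompose (pCons c p) [:0, vv ^ a:]) * x"
    using assms(2) by (simp add: pcompose_pCons algebra_simps phi_left_commute)
  finally show ?case .
qed simp

lemma pcompose_roots_poly_shift:
  "finite S \<Longrightarrow>
    pcompose (roots_poly ((+) a ` S)) [:0, vv ^ a:] = smult ((vv ^ a) ^ card S) (roots_poly S)"
proof (induct S rule: finite_induct)
  case (insert b S)
  have "a + b \<notin> (+) a ` S"
    using insert by auto
  then have "roots_poly ((+) a ` insert b S) = [:- (vv ^ (a + b)), 1:] * roots_poly ((+) a ` S)"
    using insert by (simp add: roots_poly_insert)
  moreover have "pcompose [:- (vv ^ (a + b)), 1:] [:0, vv ^ a:] = smult (vv ^ a) [:- (vv ^ b), 1:]"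
    by (simp add: pcompose_pCons power_add one_pCons)
  ultimately have "pcompose (roots_poly ((+) a ` insert b S)) [:0, vv ^ a:] =
      smult (vv ^ a) [:- (vv ^ b), 1:] * smult ((vv ^ a) ^ card S) (roots_poly S)"
    by (simp only: pcompose_mult insert(3))
  also have "\<dots> = smult ((vv ^ a) ^ card (insert b S)) (roots_poly (insert b S))"
    by (simp only: mult_smult_left mult_smult_right smult_smult roots_poly_insert[OF insert(1,2)]
        card_insert_disjoint[OF insert(1,2)] power_Suc mult.commute)
  finally show ?case .
qed (simp add: roots_poly_def one_pCons)

lemma spectrum_in_mult_eigen:
  assumes "commute A B" "A * x = phi (vv ^ a) * x" "spectrum_in B x S"
  shows "spectrum_in (A * B) x ((+) a ` S)"
proof -
  have fin: "finite S"
    using assms(3) by (simp add: spectrum_in_def)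
  have "aeval (A * B) (roots_poly ((+) a ` S)) * x
      = phi ((vv ^ a) ^ card S) * (aeval B (roots_poly S) * x)"
    using aeval_mult_eigen_pcompose[OF assms(1,2)] pcompose_roots_poly_shift[OF fin]
    by (simp add: mult.assoc)
  then show ?thesis
    using assms(3) fin by (simp add: spectrum_in_def)
qed

(* Eigenvalues of commuting elements multiply, and v^s * v^t = v^(s + t). *)
lemma spectrum_in_mult:
  assumes "commute A B" "finite SA" "spectrum_in A x SA" "spectrum_in B x SB"
  shows "spectrum_in (A * B) x ((\<lambda>(s, t). s + t) ` (SA \<times> SB))"
  using assms(2-4)
proof (induct SA arbitrary: x rule: finite_induct)
  case empty
  then show ?case
    by (simp add: spectrum_in_def roots_poly_def spectrum_in_empty)
next
  case (insert a S)
  have fin: "finite ((\<lambda>(s, t). s + t) ` (insert a S \<times> SB))"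
    using insert by (simp add: spectrum_in_def)
  obtain q where
    eigen: "spectrum_in A (aeval A q * x) {a}" and rest: "spectrum_in A (x - aeval A q * x) S"
    using spectrum_in_insert_split[OF insert(4) insert(2)] by blast
  have B_eigen: "spectrum_in B (aeval A q * x) SB"
    using insert(5) assms(1) by (intro spectrum_in_commute_mult commute_aeval_right)
  have B_rest: "spectrum_in B (x - aeval A q * x) SB"
    using insert(5) B_eigen by (rule spectrum_in_diff)
  have "spectrum_in (A * B) (aeval A q * x) ((+) a ` SB)"
    using spectrum_in_mult_eigen[OF assms(1) _ B_eigen] eigen by (simp add: spectrum_in_singleton)
  then have "spectrum_in (A * B) (aeval A q * x) ((\<lambda>(s, t). s + t) ` (insert a S \<times> SB))"
    by (rule spectrum_in_mono[OF _ fin]) auto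
  moreover have "spectrum_in (A * B) (x - aeval A q * x) ((\<lambda>(s, t). s + t) ` (insert a S \<times> SB))"
    using insert(3)[OF rest B_rest] by (rule spectrum_in_mono[OF _ fin]) auto
  ultimately show ?case
    using spectrum_in_add by fastforce
qed

lemma spectrum_in_prod_list:
  assumes "\<forall>m\<in>set J. \<forall>m'\<in>set J. commute (K m) (K m')"
    and "\<forall>m\<in>set J. spectrum_in (K m) x {a m..b m}"
  shows "spectrum_in (prod_list (map K J)) x {sum_list (map a J)..sum_list (map b J)}"
  using assms
proof (induct J)
  case (Cons m J)
  have "commute (K m) (prod_list (map K J))"
    using Cons.prems(1) by (intro commute_prod_list_right) auto
  then have "spectrum_in (K m * prod_list (map K J)) x
      ((\<lambda>(s, t). s + t) ` ({a m..b m} \<times> {sum_list (map a J)..sum_list (map b J)}))"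
    using Cons by (intro spectrum_in_mult) auto
  then have "spectrum_in (K m * prod_list (map K J)) x
      {a m + sum_list (map a J)..b m + sum_list (map b J)}"
    by (rule spectrum_in_mono) auto
  then show ?case
    by simp
qed (simp add: spectrum_in_def roots_poly_def)

lemma sum_list_map_fun_upd_Suc:
  "distinct J \<Longrightarrow> j \<in> set J \<Longrightarrow> sum_list (map (f(j := Suc (f j))) J) = Suc (sum_list (map f J))"
proof (induct J)
  case (Cons m J)
  show ?case
  proof (cases "m = j")
    case True
    then have "map (f(j := Suc (f j))) J = map f J"
      using Cons.prems(1) by (intro map_cong) auto
    then show ?thesis
      using True by (simp only: list.map sum_list.Cons fun_upd_same)
  next
    case False
    then show ?thesis
      using Cons by simp
  qed
qed simp

(* Split y into its v^(mu j)-eigencomponent for K j and a remainder z.  By spectrum_in_prod_list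
   the product of the K m has eigenvalues v^c with c > r on z, but it acts as v^r; so z = 0. *)
lemma eigenvalue_from_spectrum_sum:
  assumes commute_K: "\<forall>m\<in>set J. \<forall>m'\<in>set J. commute (K m) (K m')"
    and "distinct J"
    and spectrum: "\<forall>m\<in>set J. spectrum_in (K m) y {mu m..r}"
    and prod_K: "prod_list (map K J) = phi (vv ^ r)"
    and sum_mu: "sum_list (map mu J) = r"
    and j: "j \<in> set J"
  shows "K j * y = phi (vv ^ mu j) * y"
proof -
  have "mu j \<le> r"
    using sum_mu j member_le_sum_list[of "mu j" "map mu J"] by auto
  then have "spectrum_in (K j) y (insert (mu j) {Suc (mu j)..r})"
    using spectrum j by (metis atLeastAtMost_insertL)
  then obtain q where eigen: "spectrum_in (K j) (aeval (K j) q * y) {mu j}"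
    and rest: "spectrum_in (K j) (y - aeval (K j) q * y) {Suc (mu j)..r}"
    by (rule spectrum_in_insert_split) simp
  define z where "z = y - aeval (K j) q * y"
  define mu' where "mu' = mu(j := Suc (mu j))"
  have "spectrum_in (K m) z {mu' m..r}" if m: "m \<in> set J" for m
  proof (cases "m = j")
    case True
    then show ?thesis
      using rest by (simp add: z_def mu'_def)
  next
    case False
    have "commute (K m) (aeval (K j) q)"
      using commute_K m j by (intro commute_aeval_right) (simp add: commute_def)
    then have "spectrum_in (K m) (aeval (K j) q * y) {mu m..r}"
      using spectrum m by (intro spectrum_in_commute_mult) simp_all
    then show ?thesis
      using spectrum m False by (simp add: z_def mu'_def spectrum_in_diff)
  qed
  then have "spectrum_in (prod_list (map K J)) z {sum_list (map mu' J)..sum_list (map (\<lambda>_. r) J)}"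
    using commute_K by (intro spectrum_in_prod_list) simp_all
  moreover have "sum_list (map mu' J) = Suc r"
    unfolding mu'_def using sum_list_map_fun_upd_Suc[OF \<open>distinct J\<close> j] sum_mu by simp
  ultimately have "phi (poly (roots_poly {Suc r..sum_list (map (\<lambda>_. r) J)}) (vv ^ r)) * z = 0"
    using prod_K by (simp add: spectrum_in_def aeval_phi)
  then have "z = 0"
    by (rule phi_cancel[rotated]) (simp add: poly_roots_poly_nonzero)
  then show ?thesis
    using eigen by (simp add: z_def spectrum_in_singleton)
qed

lemma eigenvector_eq_0_if_not_root:
  assumes "aeval k (roots_poly S) = 0" "finite S" "k * x = phi c * x" "c \<notin> (\<lambda>b. vv ^ b) ` S"
  shows "x = 0"
proof (rule phi_cancel)
  show "poly (roots_poly S) c \<noteq> 0"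
    using assms(2,4) by (auto simp: poly_roots_poly)
  show "phi (poly (roots_poly S) c) * x = 0"
    using aeval_eigen[OF assms(3), of "roots_poly S"] assms(1) by simp
qed

end

section \<open>The factors of the idempotents\<close>

(* Multiplied by K^-1, this polynomial in K is the factor for s = t + 1 of qbinom_K below;
   its roots are v^t and -v^t. *)
definition qbinom_factor_poly :: "nat \<Rightarrow> qv poly" where
  "qbinom_factor_poly t =
     smult (inverse (vp (int (Suc t)) - vp (- int (Suc t)))) [:- (vv ^ t), 0, inverse (vv ^ t):]"

lemma roots_poly_dvd_prod_qbinom_factor_poly:
  "roots_poly {0..<l} dvd prod_list (map qbinom_factor_poly [0..<l])"
proof (induct l)
  case (Suc l)
  have "[:- (vv ^ l), 1:] dvd qbinom_factor_poly l"
    by (subst poly_eq_0_iff_dvd[symmetric]) (simp add: qbinom_factor_poly_def power2_eq_square)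
  from mult_dvd_mono[OF Suc this] show ?case
    by (simp add: roots_poly_def atLeast0_lessThan_Suc mult.commute)
qed (simp add: roots_poly_def)

context qv_alg begin

(* The element [K; 0 atop l] of the paper, with k = K and ki = K^-1; 1_lambda is the product
   of these for K = K_m, l = lambda_m (see one_lam_eq). *)
definition qbinom_K :: "'a \<Rightarrow> 'a \<Rightarrow> nat \<Rightarrow> 'a" where
  "qbinom_K k ki l = prod_list (map (\<lambda>s. (k * phi (vp (- int s + 1)) - ki * phi (vp (int s - 1))) *
     phi (inverse (vp (int s) - vp (- int s)))) [1..<l + 1])"

lemma qbinom_factor_eq:
  assumes "ki * k = 1"
  shows "(k * phi ia - ki * phi a) * phi c = ki * aeval k (smult c [:- a, 0, ia:])"
proof -
  have "aeval k [:- a, 0, ia:] = - phi a + k * (k * phi ia)"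
    by simp
  then have "ki * aeval k (smult c [:- a, 0, ia:]) = phi c * (ki * (- phi a + k * (k * phi ia)))"
    by (simp only: aeval_smult phi_left_commute[of ki])
  also have "\<dots> = phi c * (- (ki * phi a) + (ki * k) * (k * phi ia))"
    by (simp only: distrib_left mult_minus_right mult.assoc)
  also have "\<dots> = (k * phi ia - ki * phi a) * phi c"
    using assms by (simp add: phi_central)
  finally show ?thesis
    by simp
qed

lemma qbinom_K_Suc:
  assumes "ki * k = 1"
  shows "qbinom_K k ki (Suc l) = qbinom_K k ki l * (ki * aeval k (qbinom_factor_poly l))"
proof -
  have "- int (Suc l) + 1 = - int l" "int (Suc l) - 1 = int l"
    by simp_all
  then have "(k * phi (vp (- int (Suc l) + 1)) - ki * phi (vp (int (Suc l) - 1))) *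
      phi (inverse (vp (int (Suc l)) - vp (- int (Suc l)))) = ki * aeval k (qbinom_factor_poly l)"
    unfolding qbinom_factor_poly_def by (simp only: vp_of_nat vp_uminus qbinom_factor_eq[OF assms])
  moreover have "[1..<Suc l + 1] = [1..<l + 1] @ [Suc l]"
    by simp
  ultimately show ?thesis
    unfolding qbinom_K_def by (simp only: map_append list.map prod_list.append prod_list.Cons
        prod_list.Nil mult_1_right)
qed

lemma qbinom_K_eq_aeval:
  assumes "k * ki = 1" "ki * k = 1"
  shows "qbinom_K k ki l = ki ^ l * aeval k (prod_list (map qbinom_factor_poly [0..<l]))"
proof (induct l)
  case (Suc l)
  have "commute (aeval k (prod_list (map qbinom_factor_poly [0..<l]))) ki"
    using assms by (intro commute_aeval_left) (simp add: commute_def)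
  then show ?case
    using Suc by (simp add: qbinom_K_Suc[OF assms(2)] commute_def mult.assoc power_Suc2)
      (simp add: mult.assoc[symmetric] power_commutes)
qed (simp add: qbinom_K_def)

lemma qbinom_K_mult_aeval_roots_poly:
  assumes "k * ki = 1" "ki * k = 1" "aeval k (roots_poly {0..r}) = 0"
  shows "qbinom_K k ki l * aeval k (roots_poly {l..r}) = 0"
proof -
  obtain W where W: "prod_list (map qbinom_factor_poly [0..<l]) = roots_poly {0..<l} * W"
    using roots_poly_dvd_prod_qbinom_factor_poly by (metis dvdE)
  define U where "U = {0..<l} \<union> {l..r}"
  have "roots_poly {0..<l} * roots_poly {l..r} = roots_poly U"
    unfolding U_def roots_poly_def by (rule prod.union_disjoint[symmetric]) auto
  also have "roots_poly U = roots_poly (U - {0..r}) * roots_poly {0..r}"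
    by (rule roots_poly_subset_diff) (auto simp: U_def)
  finally have "prod_list (map qbinom_factor_poly [0..<l]) * roots_poly {l..r}
      = (W * roots_poly (U - {0..r})) * roots_poly {0..r}"
    using W by (simp add: ac_simps)
  then have "aeval k (prod_list (map qbinom_factor_poly [0..<l])) * aeval k (roots_poly {l..r}) = 0"
    using assms(3) by (metis aeval_mult mult_zero_right)
  then show ?thesis
    using qbinom_K_eq_aeval[OF assms(1,2)] by (simp add: mult.assoc)
qed

section \<open>sl_2 computations\<close>

lemma weight_power:
  assumes "U * X = phi (vp e) * X * U" "U * y = phi (vp a) * y"
  shows "U * (X ^ s * y) = phi (vp (a + int s * e)) * (X ^ s * y)"
proof (induct s)
  case (Suc s)
  have exponent: "vp e * vp (a + int s * e) = vp (a + int (Suc s) * e)"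
    by (simp add: vp_add[symmetric] algebra_simps)
  have "U * (X ^ Suc s * y) = phi (vp e) * (X * (U * (X ^ s * y)))"
    by (simp only: power_Suc mult.assoc[symmetric] assms(1))
  also have "\<dots> = phi (vp e) * (phi (vp (a + int s * e)) * (X * (X ^ s * y)))"
    by (simp only: Suc phi_left_commute[of X])
  also have "\<dots> = phi (vp (a + int (Suc s) * e)) * (X ^ Suc s * y)"
    by (simp only: phi_mult_assoc exponent power_Suc mult.assoc)
  finally show ?case .
qed (simp add: assms(2))

lemma lowering_raising_Suc:
  assumes "Y * y = 0" and "\<And>s. (Y * X - X * Y) * (X ^ s * y) = phi (d s) * (X ^ s * y)"
  shows "Y * (X ^ Suc k * y) = phi (\<Sum>s<Suc k. d s) * (X ^ k * y)"
proof (induct k)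
  case 0
  have "Y * (X ^ Suc 0 * y) = (Y * X - X * Y) * (X ^ 0 * y) + X * (Y * y)"
    by (simp add: algebra_simps)
  then show ?case
    using assms(1) assms(2)[of 0] by simp
next
  case (Suc k)
  have "Y * (X ^ Suc (Suc k) * y) = (Y * X - X * Y) * (X ^ Suc k * y) + X * (Y * (X ^ Suc k * y))"
    by (simp add: algebra_simps)
  also have "\<dots> = phi (d (Suc k)) * (X ^ Suc k * y) + X * (phi (\<Sum>s<Suc k. d s) * (X ^ k * y))"
    by (simp only: assms(2) Suc)
  also have "\<dots> = phi (\<Sum>s<Suc (Suc k). d s) * (X ^ Suc k * y)"
    by (simp add: phi_left_commute[of X] mult.assoc algebra_simps)
  finally show ?case .
qed

lemma lowering_raising_power:
  assumes "Y * y = 0" and "\<And>s. (Y * X - X * Y) * (X ^ s * y) = phi (d s) * (X ^ s * y)"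
  shows "Y ^ c * X ^ c * y = phi (\<Prod>k\<in>{1..c}. \<Sum>s<k. d s) * y"
proof (induct c)
  case (Suc c)
  have "Y ^ Suc c * X ^ Suc c * y = Y ^ c * (Y * (X ^ Suc c * y))"
    by (simp only: power_Suc2 mult.assoc)
  also have "\<dots> = phi (\<Sum>s<Suc c. d s) * (Y ^ c * X ^ c * y)"
    by (simp only: lowering_raising_Suc[OF assms] phi_left_commute[of "Y ^ c"] mult.assoc)
  also have "\<dots> = phi (\<Prod>k\<in>{1..Suc c}. \<Sum>s<k. d s) * y"
    by (simp only: Suc phi_mult_assoc) (simp add: atLeastAtMostSuc_conv mult.commute)
  finally show ?case .
qed simp

(* The scalar is prod_{k=1..c} [k] [L + 1 - k] (sum_qint_arith); for L < c its factor
   k = L + 1 vanishes. *)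
lemma lowering_raising_scalar:
  assumes "Y * y = 0"
    and "\<And>s. (Y * X - X * Y) * (X ^ s * y) = phi (qint (int L - 2 * int s)) * (X ^ s * y)"
  shows "\<exists>z\<in>laurent_int. z \<noteq> 0 \<and> (L \<ge> c \<longrightarrow> Y ^ c * X ^ c * y = phi z * y) \<and>
     (L < c \<longrightarrow> Y ^ c * X ^ c * y = 0) \<and> (c = 1 \<and> L = 1 \<longrightarrow> z = 1)"
proof -
  define z where "z = (\<Prod>k\<in>{1..c}. qint (int k) * qint (int L + 1 - int k))"
  have YX: "Y ^ c * X ^ c * y = phi z * y"
    using lowering_raising_power[OF assms] by (simp add: z_def sum_qint_arith)
  show ?thesis
  proof (cases "c \<le> L")
    case True
    have "z \<noteq> 0"
      using True by (auto simp: z_def qint_nonzero)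
    moreover have "z \<in> laurent_int"
      unfolding z_def using True
      by (intro laurent_int_prod laurent_int_mult qint_in_laurent_int) auto
    ultimately show ?thesis
      using YX True by (intro bexI[of _ z]) (auto simp: z_def)
  next
    case False
    then have "z = 0"
      unfolding z_def by (intro prod_zero bexI[of _ "Suc L"]) auto
    then show ?thesis
      using YX False one_in_laurent_int by (intro bexI[of _ 1]) auto
  qed
qed

end

section \<open>The algebra T\<close>

lemma per_in_range:
  assumes "0 < n"
  shows "per n i \<in> {1..int n}"
proof -
  have "0 \<le> (i - 1) mod int n" "(i - 1) mod int n < int n"
    using assms by simp_all
  then show ?thesis
    by (simp add: per_def)
qed

lemma per_per_add: "per n (per n i + k) = per n (i + k)"
  by (simp add: per_def mod_add_left_eq) (simp add: algebra_simps)

lemma eps_plus_per: "eps_plus n (per n i) (per n j) = eps_plus n i j"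
  using per_per_add[of n _ 0] per_per_add[of n i "- 1"] by (simp add: eps_plus_def)

lemma eps_plus_self: "eps_plus n i i = 1"
  by (simp add: eps_plus_def)

lemma eps_plus_succ:
  assumes "2 \<le> n"
  shows "eps_plus n (i + 1) i = - 1"
proof -
  have "\<not> int n dvd 1"
    using assms by simp
  then have "per n (i + 1) \<noteq> per n i"
    by (simp add: per_def mod_eq_dvd_iff)
  then show ?thesis
    by (simp add: eps_plus_def)
qed

lemma Lambda_periodic:
  assumes "lam \<in> Lambda n r"
  shows "lam (per n i) = lam i"
proof -
  have shift: "lam (j + int k * int n) = lam j" for j k
  proof (induct k)
    case (Suc k)
    have "lam (j + int (Suc k) * int n) = lam ((j + int k * int n) + int n)"
      by (simp add: algebra_simps)
    then show ?case
      using assms(1) Suc by (simp add: Lambda_def)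
  qed simp
  define q where "q = (i - 1) div int n"
  have per: "per n i = i - q * int n"
    unfolding per_def q_def using div_mult_mod_eq[of "i - 1" "int n"] by linarith
  show ?thesis
  proof (cases "q \<ge> 0")
    case True
    then show ?thesis
      using shift[of "per n i" "nat q"] per by simp
  next
    case False
    then show ?thesis
      using shift[of i "nat (- q)"] per by simp
  qed
qed

(* The generators of T in an arbitrary Q(v)-algebra satisfying its relations.  Without
   2 <= n the indices i and i + 1 would coincide modulo n. *)
locale T_algebra =
  fixes n r :: nat and phi :: "qv \<Rightarrow> 'a::ring_1" and E F K Ki :: "int \<Rightarrow> 'a"
  assumes T_rel: "T_rel n r phi E F K Ki" and two_le_n: "2 \<le> n"

sublocale T_algebra \<subseteq> qv_alg phi
  using T_rel by unfold_locales (simp add: T_rel_def)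

context T_algebra begin

lemma per_mem: "per n i \<in> {1..int n}"
  using two_le_n by (intro per_in_range) simp

lemma periodic: "E (per n i) = E i" "F (per n i) = F i" "K (per n i) = K i" "Ki (per n i) = Ki i"
  using T_rel by (simp_all add: T_rel_def)

lemma K_commute: "K i * K j = K j * K i"
  and K_Ki: "K i * Ki i = 1"
  and Ki_K: "Ki i * K i = 1"
  and K_E: "K i * E j = phi (vp (eps_plus n i j)) * E j * K i"
  and K_F: "K i * F j = phi (vp (- eps_plus n i j)) * F j * K i"
  using T_rel per_mem[of i] per_mem[of j] unfolding T_rel_def by (metis periodic eps_plus_per)+

lemma E_F_commutator:
  "E i * F i - F i * E i = phi (inverse (vv - inverse vv)) * (K i * Ki (i + 1) - Ki i * K (i + 1))"
proof -
  have "\<forall>j\<in>{1..int n}. E j * F j - F j * E j =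
      phi (inverse (vv - inverse vv)) * (K j * Ki (j + 1) - Ki j * K (j + 1))"
    using T_rel unfolding T_rel_def by simp
  then have "E (per n i) * F (per n i) - F (per n i) * E (per n i) =
      phi (inverse (vv - inverse vv)) *
        (K (per n i) * Ki (per n i + 1) - Ki (per n i) * K (per n i + 1))"
    using per_mem by blast
  moreover have "K (per n i + 1) = K (i + 1)" "Ki (per n i + 1) = Ki (i + 1)"
    using periodic(3,4)[of "per n i + 1"] periodic(3,4)[of "i + 1"] per_per_add[of n i 1]
    by simp_all
  ultimately show ?thesis
    by (simp only: periodic)
qed

lemma aeval_K_roots_poly: "aeval (K i) (roots_poly {0..r}) = 0"
proof -
  have "roots_poly {0..r} = prod_list (map (\<lambda>j. [:- (vv ^ j), 1:]) [0..<r + 1])"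
  proof -
    have "set [0..<r + 1] = {0..r}"
      by auto
    then show ?thesis
      unfolding roots_poly_def by (metis distinct_upt prod.distinct_set_conv_list)
  qed
  then have "aeval (K i) (roots_poly {0..r})
      = prod_list (map (\<lambda>j. aeval (K i) [:- (vv ^ j), 1:]) [0..<r + 1])"
    by (simp only: aeval_prod_list map_map o_def)
  also have "\<dots> = prod_list (map (\<lambda>j. K i - phi (vv ^ j)) [0..<r + 1])"
    by (rule arg_cong[where f = prod_list], rule map_cong) simp_all
  also have "\<dots> = 0"
    using T_rel per_mem[of i] unfolding T_rel_def by (metis periodic(3))
  finally show ?thesis .
qed

lemma one_lam_eq:
  "one_lam n phi K Ki lam = prod_list (map (\<lambda>m. qbinom_K (K m) (Ki m) (lam m)) [1..int n])"
  by (simp add: one_lam_def qbinom_K_def)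

lemma one_lam_spectrum_in:
  assumes "lam \<in> Lambda n r"
  shows "spectrum_in (K m) (one_lam n phi K Ki lam) {lam m..r}"
proof -
  define X where "X = aeval (K m) (roots_poly {lam m..r})"
  have commute_K_K: "commute (K j) (K j')" for j j'
    using K_commute by (simp add: commute_def)
  have commute_K_Ki: "commute (K j) (Ki j')" for j j'
    using commute_inverse[OF commute_K_K K_Ki Ki_K] by (rule commute_sym)
  have commute_X: "commute X (qbinom_K (K j) (Ki j) l)" for j l
    unfolding X_def qbinom_K_def
    by (intro commute_aeval_left) (auto intro!: commute_prod_list_right commute_mult_right
        commute_diff_right commute_K_K commute_K_Ki)
  have "qbinom_K (K m) (Ki m) (lam m) = qbinom_K (K (per n m)) (Ki (per n m)) (lam (per n m))"
    using Lambda_periodic[OF assms] by (simp add: periodic)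
  then have "qbinom_K (K m) (Ki m) (lam m)
      \<in> set (map (\<lambda>m. qbinom_K (K m) (Ki m) (lam m)) [1..int n])"
    using per_mem[of m] by auto
  moreover have "qbinom_K (K m) (Ki m) (lam m) * X = 0"
    unfolding X_def using K_Ki Ki_K aeval_K_roots_poly by (rule qbinom_K_mult_aeval_roots_poly)
  ultimately have "one_lam n phi K Ki lam * X = 0"
    unfolding one_lam_eq using commute_X by (intro prod_list_mult_eq_zero) (auto intro: commute_sym)
  moreover have "commute X (one_lam n phi K Ki lam)"
    unfolding one_lam_eq by (intro commute_prod_list_right) (auto intro: commute_X)
  ultimately show ?thesis
    unfolding spectrum_in_def X_def by (simp add: commute_def)
qed

lemma K_one_lam:
  assumes "lam \<in> Lambda n r"
  shows "K m * one_lam n phi K Ki lam = phi (vp (int (lam m))) * one_lam n phi K Ki lam"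
proof -
  have "(\<Sum>j\<in>{1..int n}. lam j) = r"
    using assms by (simp add: Lambda_def)
  then have "sum_list (map lam [1..int n]) = r"
    by (simp add: sum_list_distinct_conv_sum_set)
  moreover have "prod_list (map K [1..int n]) = phi (vv ^ r)"
    using T_rel by (simp add: T_rel_def)
  ultimately have
    "K (per n m) * one_lam n phi K Ki lam = phi (vv ^ lam (per n m)) * one_lam n phi K Ki lam"
    using per_mem[of m] K_commute one_lam_spectrum_in[OF assms]
    by (intro eigenvalue_from_spectrum_sum[of "[1..int n]" K]) (auto simp: commute_def)
  then show ?thesis
    by (simp add: periodic Lambda_periodic[OF assms])
qed

lemma Ki_eigen:
  assumes "K i * x = phi (vp a) * x"
  shows "Ki i * x = phi (vp (- a)) * x"
  using eigen_inverse[OF Ki_K assms] by (simp add: vp_uminus)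

lemma commutator_on_weight_vector:
  assumes "K i * x = phi (vp a) * x" "K (i + 1) * x = phi (vp b) * x"
  shows "(E i * F i - F i * E i) * x = phi (qint (a - b)) * x"
proof -
  have exponents: "vp (- b) * vp a = vp (a - b)" "vp b * vp (- a) = vp (- (a - b))"
    by (simp_all add: vp_add[symmetric])
  have "(E i * F i - F i * E i) * x =
      phi (inverse (vv - inverse vv)) * (K i * (Ki (i + 1) * x) - Ki i * (K (i + 1) * x))"
    by (simp add: E_F_commutator mult.assoc left_diff_distrib)
  also have "\<dots> = phi (inverse (vv - inverse vv)) *
      (phi (vp (- b) * vp a) * x - phi (vp b * vp (- a)) * x)"
    using assms Ki_eigen[OF assms(1)] Ki_eigen[OF assms(2)]
    by (simp add: phi_left_commute[of "K i"] phi_left_commute[of "Ki i"] mult.assoc)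
  also have "\<dots> = phi (inverse (vv - inverse vv) * (vp (a - b) - vp (- (a - b)))) * x"
    by (simp only: exponents phi_mult phi_diff left_diff_distrib mult.assoc)
  also have "\<dots> = phi (qint (a - b)) * x"
    by (simp add: qint_def divide_inverse mult.commute)
  finally show ?thesis .
qed

lemma F_one_lam_eq_0:
  assumes "lam \<in> Lambda n r" "lam i = 0"
  shows "F i * one_lam n phi K Ki lam = 0"
proof (rule eigenvector_eq_0_if_not_root[where S = "{0..r}"])
  show "K i * (F i * one_lam n phi K Ki lam) = phi (vp (- 1)) * (F i * one_lam n phi K Ki lam)"
    using weight_power[OF K_F K_one_lam[OF assms(1)], of i i 1] assms(2)
    by (simp add: eps_plus_self)
qed (simp_all add: aeval_K_roots_poly vp_minus_one_not_vv_power)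

lemma E_one_lam_eq_0:
  assumes "lam \<in> Lambda n r" "lam (i + 1) = 0"
  shows "E i * one_lam n phi K Ki lam = 0"
proof (rule eigenvector_eq_0_if_not_root[where S = "{0..r}"])
  show "K (i + 1) * (E i * one_lam n phi K Ki lam)
      = phi (vp (- 1)) * (E i * one_lam n phi K Ki lam)"
    using weight_power[OF K_E K_one_lam[OF assms(1)], of "i + 1" i 1] assms(2)
    by (simp add: eps_plus_succ[OF two_le_n])
qed (simp_all add: aeval_K_roots_poly vp_minus_one_not_vv_power)

lemma F_power_E_power_one_lam:
  assumes "lam \<in> Lambda n r" "lam i = 0"
  shows "\<exists>z\<in>laurent_int. z \<noteq> 0 \<and>
    (lam (i + 1) \<ge> c \<longrightarrow>
      F i ^ c * E i ^ c * one_lam n phi K Ki lam = phi z * one_lam n phi K Ki lam) \<and>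
    (lam (i + 1) < c \<longrightarrow> F i ^ c * E i ^ c * one_lam n phi K Ki lam = 0) \<and>
    (c = 1 \<and> lam (i + 1) = 1 \<longrightarrow> z = 1)"
proof (rule lowering_raising_scalar[OF F_one_lam_eq_0[OF assms]])
  fix s
  let ?x = "E i ^ s * one_lam n phi K Ki lam"
  have "K i * ?x = phi (vp (int s)) * ?x"
    using weight_power[OF K_E K_one_lam[OF assms(1)], of i i s] assms(2)
    by (simp add: eps_plus_self)
  moreover have "K (i + 1) * ?x = phi (vp (int (lam (i + 1)) - int s)) * ?x"
    using weight_power[OF K_E K_one_lam[OF assms(1)], of "i + 1" i s]
    by (simp add: eps_plus_succ[OF two_le_n])
  ultimately have
    "(E i * F i - F i * E i) * ?x = phi (qint (int s - (int (lam (i + 1)) - int s))) * ?x"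
    by (rule commutator_on_weight_vector)
  then show "(F i * E i - E i * F i) * ?x = phi (qint (int (lam (i + 1)) - 2 * int s)) * ?x"
    using qint_uminus[of "int s - (int (lam (i + 1)) - int s)"]
    by (simp add: left_diff_distrib algebra_simps)
qed

lemma E_power_F_power_one_lam:
  assumes "lam \<in> Lambda n r" "lam (i + 1) = 0"
  shows "\<exists>z\<in>laurent_int. z \<noteq> 0 \<and>
    (lam i \<ge> c \<longrightarrow>
      E i ^ c * F i ^ c * one_lam n phi K Ki lam = phi z * one_lam n phi K Ki lam) \<and>
    (lam i < c \<longrightarrow> E i ^ c * F i ^ c * one_lam n phi K Ki lam = 0) \<and>
    (c = 1 \<and> lam i = 1 \<longrightarrow> z = 1)"
proof (rule lowering_raising_scalar[OF E_one_lam_eq_0[OF assms]])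
  fix s
  let ?x = "F i ^ s * one_lam n phi K Ki lam"
  have "K i * ?x = phi (vp (int (lam i) - int s)) * ?x"
    using weight_power[OF K_F K_one_lam[OF assms(1)], of i i s] by (simp add: eps_plus_self)
  moreover have "K (i + 1) * ?x = phi (vp (int s)) * ?x"
    using weight_power[OF K_F K_one_lam[OF assms(1)], of "i + 1" i s] assms(2)
    by (simp add: eps_plus_succ[OF two_le_n])
  ultimately have "(E i * F i - F i * E i) * ?x = phi (qint (int (lam i) - int s - int s)) * ?x"
    by (rule commutator_on_weight_vector)
  then show "(E i * F i - F i * E i) * ?x = phi (qint (int (lam i) - 2 * int s)) * ?x"
    by (simp add: algebra_simps)
qed

end

theorem lemma2p2p7:
  fixes phi :: "qv \<Rightarrow> 'a::ring_1" and E F K Ki :: "int \<Rightarrow> 'a"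
    and n r c :: nat and lam :: "int \<Rightarrow> nat" and i :: int
  assumes "r \<ge> 3" and "n > r" and "c \<ge> 1"
    and "lam \<in> Lambda n r" and "i \<in> {1..int n}"
    and "T_rel n r phi E F K Ki"
  shows "(lam i = 0 \<longrightarrow>
           (\<exists>z\<in>laurent_int. z \<noteq> 0 \<and>
              (lam (i + 1) \<ge> c \<longrightarrow> F i ^ c * E i ^ c * one_lam n phi K Ki lam = phi z * one_lam n phi K Ki lam) \<and>
              (lam (i + 1) < c \<longrightarrow> F i ^ c * E i ^ c * one_lam n phi K Ki lam = 0) \<and>
              (c = 1 \<and> lam (i + 1) = 1 \<longrightarrow> z = 1)))
       \<and> (lam (i + 1) = 0 \<longrightarrow>
           (\<exists>z'\<in>laurent_int. z' \<noteq> 0 \<and>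
              (lam i \<ge> c \<longrightarrow> E i ^ c * F i ^ c * one_lam n phi K Ki lam = phi z' * one_lam n phi K Ki lam) \<and>
              (lam i < c \<longrightarrow> E i ^ c * F i ^ c * one_lam n phi K Ki lam = 0) \<and>
              (c = 1 \<and> lam i = 1 \<longrightarrow> z' = 1)))"
proof -
  interpret T_algebra n r phi E F K Ki
    using assms(1,2,6) by unfold_locales simp_all
  show ?thesis
    using F_power_E_power_one_lam[OF assms(4)] E_power_F_power_one_lam[OF assms(4)] by blast
qed

end
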